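(* Let $\mathcal{C}\le\mathbb{F}_q^n$ be a linear code with $q\neq 2$, and assume every codeword of $\mathcal{C}$ has even weight. Let $c_1,\dots,c_r\in\mathcal{C}$ be codewords of weight $2$ such that $c_i\notin\langle c_j\rangle_{\mathbb{F}_q}$ for all $i\neq j$. Then $\mathrm{supp}(c_i)\cap\mathrm{supp}(c_j)=\emptyset$ for all $i\neq j$.
   Context: The support of $c\in\mathbb{F}_q^n$ is $\mathrm{supp}(c)=\{k: c_k\neq 0\}$ and its weight is $|\mathrm{supp}(c)|$. *)

theory Defs
  imports "HOL-Analysis.Analysis"
begin

text \<open>Vectors in F_q^n are rendered as 'a ^ 'n with 'a a finite field and 'n a finite
index type with CARD('n) = n. Support and Hamming weight:\<close>

definition supp :: "'a::zero ^ 'n \<Rightarrow> 'n set" where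
  "supp c = {k. c $ k \<noteq> 0}"

definition weight :: "'a::zero ^ 'n \<Rightarrow> nat" where
  "weight c = card (supp c)"

end

theory Submission
  imports Defs
begin

text \<open>Two weight-2 codewords \<open>u\<close>, \<open>v\<close> sharing a coordinate \<open>k\<close> span a code containing all
  \<open>u + t v\<close>. If their supports coincide, eliminating \<open>k\<close> leaves a word of weight at most 1,
  hence zero, so \<open>u\<close> and \<open>v\<close> are proportional. Otherwise, since \<open>q \<ge> 3\<close> there is a \<open>t \<noteq> 0\<close>
  with \<open>u\<^sub>k + t v\<^sub>k \<noteq> 0\<close>, and \<open>u + t v\<close> has weight 3, contradicting evenness.\<close>

lemma supp_add_scale_subset:
  fixes u v :: "'a::semiring_0 ^ 'n"
  shows "supp (u + t *s v) \<subseteq> supp u \<union> supp v"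
  by (auto simp: supp_def)

lemma weight_eq_0_iff: "weight (x :: 'a::zero ^ 'n) = 0 \<longleftrightarrow> x = 0"
  by (auto simp: weight_def supp_def vec_eq_iff)

lemma exists_nonzero_neq:
  assumes "CARD('a::zero_neq_one) \<noteq> 2"
  shows "\<exists>t::'a. t \<noteq> 0 \<and> t \<noteq> a"
proof (rule ccontr)
  assume "\<not> ?thesis"
  then have univ: "UNIV = {0, a}" by auto
  then have "a \<noteq> 0" by (metis UNIV_I insertE singletonD zero_neq_one)
  with univ have "CARD('a) = 2" by (metis card_2_iff)
  with assms show False ..
qed

lemma even_code_proportional_if_supp_subset_pair:
  fixes C :: "('a::field ^ 'n) set"
  assumes lin: "vec.subspace C" and even: "\<forall>x\<in>C. even (weight x)"
    and u: "u \<in> C" and v: "v \<in> C" and vk: "v $ k \<noteq> 0"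
    and supp_u: "supp u \<subseteq> {k, a}" and supp_v: "supp v \<subseteq> {k, a}"
  shows "u \<in> vec.span {v}"
proof -
  define s where "s = u $ k / v $ k"
  define x where "x = u + (- s) *s v"
  have "x \<in> C" unfolding x_def using lin u v by (intro vec.subspace_add vec.subspace_scale)
  have "x $ k = 0" using vk by (simp add: x_def s_def)
  moreover have "supp x \<subseteq> {k, a}"
    using supp_add_scale_subset[of u "- s" v] supp_u supp_v unfolding x_def by blast
  ultimately have "supp x \<subseteq> {a}" by (auto simp: supp_def)
  then have "weight x \<le> 1"
    unfolding weight_def using card_mono[of "{a}" "supp x"] by simp
  with even \<open>x \<in> C\<close> have "weight x = 0" by fastforce
  then have "u = s *s v" by (simp add: weight_eq_0_iff x_def algebra_simps)
  then show ?thesis by (simp add: vec.span_base vec.span_scale)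
qed

lemma even_code_no_overlapping_weight_two_pair:
  fixes C :: "('a::field ^ 'n) set"
  assumes q: "CARD('a) \<noteq> 2"
    and lin: "vec.subspace C" and even: "\<forall>x\<in>C. even (weight x)"
    and u: "u \<in> C" and v: "v \<in> C"
    and supp_u: "supp u = {k, a}" and supp_v: "supp v = {k, b}"
    and distinct: "a \<noteq> b" "a \<noteq> k" "b \<noteq> k"
  shows False
proof -
  have nz: "u $ k \<noteq> 0" "u $ a \<noteq> 0" "v $ k \<noteq> 0" "v $ b \<noteq> 0"
    using supp_u supp_v by (auto simp: supp_def set_eq_iff)
  have zero: "u $ b = 0" "v $ a = 0"
    using supp_u supp_v distinct by (auto simp: supp_def set_eq_iff)
  obtain t where t: "t \<noteq> 0" "t \<noteq> - (u $ k / v $ k)"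
    using exists_nonzero_neq[OF q] by blast
  define x where "x = u + t *s v"
  have "x \<in> C" unfolding x_def using lin u v by (intro vec.subspace_add vec.subspace_scale)
  have "x $ k \<noteq> 0"
  proof
    assume "x $ k = 0"
    then have "t = - (u $ k / v $ k)" using nz(3) by (simp add: x_def field_simps add_eq_0_iff)
    with t(2) show False ..
  qed
  moreover have "x $ a \<noteq> 0" "x $ b \<noteq> 0" using nz zero t(1) by (simp_all add: x_def)
  ultimately have "supp x = {k, a, b}"
    using supp_add_scale_subset[of u t v] supp_u supp_v by (auto simp: x_def supp_def)
  then have "weight x = 3" using distinct by (simp add: weight_def)
  with even \<open>x \<in> C\<close> show False by fastforce
qed

lemma even_code_weight_two_supp_disjoint:
  fixes C :: "('a::field ^ 'n) set"
  assumes q: "CARD('a) \<noteq> 2"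
    and lin: "vec.subspace C" and even: "\<forall>x\<in>C. even (weight x)"
    and u: "u \<in> C" and v: "v \<in> C"
    and wu: "weight u = 2" and wv: "weight v = 2"
    and not_prop: "u \<notin> vec.span {v}"
  shows "supp u \<inter> supp v = {}"
proof (rule ccontr)
  assume "supp u \<inter> supp v \<noteq> {}"
  then obtain k where k: "k \<in> supp u" "k \<in> supp v" by blast
  obtain a where a: "a \<noteq> k" "supp u = {k, a}"
    using wu k(1) unfolding weight_def by (metis card_2_iff insert_commute insertE singletonD)
  obtain b where b: "b \<noteq> k" "supp v = {k, b}"
    using wv k(2) unfolding weight_def by (metis card_2_iff insert_commute insertE singletonD)
  show False
  proof (cases "a = b")
    case True
    have "v $ k \<noteq> 0" using k(2) by (simp add: supp_def)
    with True a b have "u \<in> vec.span {v}"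
      by (intro even_code_proportional_if_supp_subset_pair[OF lin even u v]) auto
    with not_prop show False ..
  next
    case False
    with a b show False
      using even_code_no_overlapping_weight_two_pair[OF q lin even u v] by blast
  qed
qed

theorem corollary3p2:
  fixes C :: "('a::{field,finite} ^ 'n) set"
    and c :: "nat \<Rightarrow> 'a ^ 'n"
    and r :: nat
  assumes q: "CARD('a) \<noteq> 2"
    and lin: "vec.subspace C"
    and even: "\<forall>x\<in>C. even (weight x)"
    and cC: "\<forall>i\<in>{1..r}. c i \<in> C"
    and w2: "\<forall>i\<in>{1..r}. weight (c i) = 2"
    and indep: "\<forall>i\<in>{1..r}. \<forall>j\<in>{1..r}. i \<noteq> j \<longrightarrow> c i \<notin> vec.span {c j}"
  shows "\<forall>i\<in>{1..r}. \<forall>j\<in>{1..r}. i \<noteq> j \<longrightarrow> supp (c i) \<inter> supp (c j) = {}"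
  using even_code_weight_two_supp_disjoint[OF q lin even] cC w2 indep by blast

end
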